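(* In the migration–birth–death dynamics described below, if the dynamics is not $(t,0)$-stable, then the migration phase at step $t$ increases $\Phi(\mathbf{x})=\sum_v\mathbf{x}_v^2$ by at least $2\alpha_{\min}\epsilon\delta^3$.
   Context: Migration–birth–death dynamics: at each step there is a finite connected undirected graph of types, each type $v$ has mass $\mathbf{x}_v\ge0$, masses sum to $1$, and each edge $uv$ carries a continuously differentiable, increasing, odd function $F_{uv}=F_{vu}:[-1,1]\to[-1,1]$ with $F_{uv}(0)=0$. Let $\alpha_{\min}=\min_{uv,\,x\in[-1,1]}F'_{uv}(x)$ and $\alpha_{\max}=\max_{uv,\,x\in[-1,1]}F'_{uv}(x)$. Fixed parameters: $\epsilon>0$, $\delta>0$, $p\in[0,1]$, and a distribution $\mathcal{D}$ with support $[\beta_{\min},\beta_{\max}]$. Each step consists of three phases in order. (1) Migration: for each edge $uv$, an amount $\mathbf{x}_u\mathbf{x}_vF_{uv}(\mathbf{x}_u-\mathbf{x}_v)$ of mass moves from $v$ to $u$ (negative meaning the reverse direction), all simultaneously from current masses, except that no mass moves along $uv$ if $|\mathbf{x}_u-\mathbf{x}_v|\le\delta$. (2) Birth: with probability $p$ (independently of other steps) a new type $v$ is created; each existing type $u$ independently draws $Z_u\sim\mathcal{D}$ and transfers mass $Z_u\mathbf{x}_u$ to $v$; $v$ is connected to the existing graph arbitrarily so that it remains connected. (3) Death: a type $v$ with $\mathbf{x}_v\le\epsilon$ dies: its mass is split equally among its neighbours, $v$ is removed, and edges are added arbitrarily among its neighbours to keep the graph connected. The dynamics is $(T,d)$-stable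 iff for all $t$ with $T\le t\le T+d$ no population mass moves in the migration phase of step $t$. *)

theory Defs
  imports Complex_Main
begin

record state =
  verts :: "nat set"
  edges :: "(nat \<times> nat) set"
  mass  :: "nat \<Rightarrow> real"

definition graph_ok :: "state \<Rightarrow> bool" where
  "graph_ok s \<longleftrightarrow> finite (verts s) \<and> edges s \<subseteq> verts s \<times> verts s
     \<and> sym (edges s) \<and> irrefl (edges s)
     \<and> (\<forall>u\<in>verts s. \<forall>w\<in>verts s. (u, w) \<in> (edges s)\<^sup>*)"

definition nbrs :: "state \<Rightarrow> nat \<Rightarrow> nat set" where
  "nbrs s v = {u. (v, u) \<in> edges s}"

text \<open>Amount of mass moved from v to u along edge uv in the migration phase
  (negative means the reverse direction); zero if the masses differ by at most delta.\<close>

definition flow :: "(nat \<Rightarrow> nat \<Rightarrow> real \<Rightarrow> real) \<Rightarrow> real \<Rightarrow> state \<Rightarrow> nat \<Rightarrow> nat \<Rightarrow> real" where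
  "flow F \<delta> s u v =
     (if \<bar>mass s u - mass s v\<bar> \<le> \<delta> then 0
      else mass s u * mass s v * F u v (mass s u - mass s v))"

definition migrate :: "(nat \<Rightarrow> nat \<Rightarrow> real \<Rightarrow> real) \<Rightarrow> real \<Rightarrow> state \<Rightarrow> state" where
  "migrate F \<delta> s = s\<lparr>mass := (\<lambda>w. if w \<in> verts s
        then mass s w + (\<Sum>u\<in>nbrs s w. flow F \<delta> s w u) else mass s w)\<rparr>"

definition mass_moves :: "(nat \<Rightarrow> nat \<Rightarrow> real \<Rightarrow> real) \<Rightarrow> real \<Rightarrow> state \<Rightarrow> bool" where
  "mass_moves F \<delta> s \<longleftrightarrow> (\<exists>(u, v)\<in>edges s. flow F \<delta> s u v \<noteq> 0)"

text \<open>A birth event: new type w, each existing type u gives Z_u x_u with Z_u in the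
  support [beta_min, beta_max] of D; w is joined to a set N of existing types so that
  the graph stays connected.\<close>

definition birth_step :: "real \<Rightarrow> real \<Rightarrow> state \<Rightarrow> state \<Rightarrow> bool" where
  "birth_step bmin bmax s s' \<longleftrightarrow>
     (\<exists>w Z N. w \<notin> verts s \<and> (\<forall>u\<in>verts s. Z u \<in> {bmin..bmax}) \<and> N \<subseteq> verts s
       \<and> verts s' = insert w (verts s)
       \<and> edges s' = edges s \<union> {(w, u) | u. u \<in> N} \<union> {(u, w) | u. u \<in> N}
       \<and> mass s' = (\<lambda>u. if u = w then (\<Sum>v\<in>verts s. Z v * mass s v)
                        else if u \<in> verts s then mass s u - Z u * mass s u
                        else mass s u)
       \<and> graph_ok s')"

definition birth_phase :: "real \<Rightarrow> real \<Rightarrow> real \<Rightarrow> state \<Rightarrow> state \<Rightarrow> bool" where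
  "birth_phase p bmin bmax s s' \<longleftrightarrow>
     (p < 1 \<and> s' = s) \<or> (0 < p \<and> birth_step bmin bmax s s')"

definition death_step :: "real \<Rightarrow> state \<Rightarrow> state \<Rightarrow> bool" where
  "death_step \<epsilon> s s' \<longleftrightarrow>
     (\<exists>v\<in>verts s. mass s v \<le> \<epsilon>
       \<and> verts s' = verts s - {v}
       \<and> (\<exists>A. A \<subseteq> {(a, b). a \<in> nbrs s v \<and> b \<in> nbrs s v \<and> a \<noteq> b}
              \<and> edges s' = {(a, b) \<in> edges s. a \<noteq> v \<and> b \<noteq> v} \<union> A)
       \<and> mass s' = (\<lambda>u. if u \<in> nbrs s v then mass s u + mass s v / real (card (nbrs s v))
                        else mass s u)
       \<and> graph_ok s')"

inductive death_phase :: "real \<Rightarrow> state \<Rightarrow> state \<Rightarrow> bool" for \<epsilon> :: real where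
  finished: "(\<forall>v\<in>verts s. \<epsilon> < mass s v) \<Longrightarrow> death_phase \<epsilon> s s"
| step: "death_step \<epsilon> s s1 \<Longrightarrow> death_phase \<epsilon> s1 s2 \<Longrightarrow> death_phase \<epsilon> s s2"

definition valid_initial :: "real \<Rightarrow> state \<Rightarrow> bool" where
  "valid_initial \<epsilon> s \<longleftrightarrow> graph_ok s \<and> verts s \<noteq> {}
     \<and> (\<forall>v\<in>verts s. 0 \<le> mass s v) \<and> (\<Sum>v\<in>verts s. mass s v) = 1
     \<and> (\<forall>v\<in>verts s. \<epsilon> < mass s v)"

text \<open>X t is the configuration at the beginning of step t (t = 0, 1, 2, ...).\<close>

definition run :: "(nat \<Rightarrow> nat \<Rightarrow> real \<Rightarrow> real) \<Rightarrow> real \<Rightarrow> real \<Rightarrow> real \<Rightarrow> real \<Rightarrow> real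
                   \<Rightarrow> (nat \<Rightarrow> state) \<Rightarrow> bool" where
  "run F \<epsilon> \<delta> p bmin bmax X \<longleftrightarrow> valid_initial \<epsilon> (X 0) \<and>
     (\<forall>t. \<exists>b. birth_phase p bmin bmax (migrate F \<delta> (X t)) b \<and> death_phase \<epsilon> b (X (Suc t)))"

definition stable :: "(nat \<Rightarrow> nat \<Rightarrow> real \<Rightarrow> real) \<Rightarrow> real \<Rightarrow> (nat \<Rightarrow> state) \<Rightarrow> nat \<Rightarrow> nat \<Rightarrow> bool" where
  "stable F \<delta> X T d \<longleftrightarrow> (\<forall>t. T \<le> t \<and> t \<le> T + d \<longrightarrow> \<not> mass_moves F \<delta> (X t))"

definition Phi :: "state \<Rightarrow> real" where
  "Phi s = (\<Sum>v\<in>verts s. (mass s v)\<^sup>2)"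

definition alpha_min :: "(nat \<Rightarrow> nat \<Rightarrow> real \<Rightarrow> real) \<Rightarrow> real" where
  "alpha_min F' = Inf {F' u v x | u v x. u \<noteq> v \<and> x \<in> {-1..1}}"

end

theory Submission
  imports Defs "HOL-Analysis.Analysis"
begin

text \<open>Write \<open>g(u,v)\<close> for the mass moved from \<open>v\<close> to \<open>u\<close>. Since \<open>(a + b)\<^sup>2 \<ge> a\<^sup>2 + 2ab\<close>,
  migration raises \<open>\<Phi>\<close> by at least \<open>2 \<Sum>\<^sub>u x\<^sub>u \<Sum>\<^sub>v g(u,v)\<close>, and antisymmetry of \<open>g\<close> turns this
  into \<open>\<Sum> (x\<^sub>u - x\<^sub>v) g(u,v)\<close> over the directed edges. With \<open>d = x\<^sub>u - x\<^sub>v\<close> each summand is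
  \<open>x\<^sub>u x\<^sub>v d F(d) \<ge> \<alpha>\<^sub>m\<^sub>i\<^sub>n x\<^sub>u x\<^sub>v d\<^sup>2 \<ge> 0\<close> by the mean value theorem and \<open>F(0) = 0\<close>. On an edge where
  mass moves, \<open>|d| > \<delta>\<close>, so the heavier endpoint has mass above \<open>\<delta>\<close> and the lighter one
  above \<open>\<epsilon>\<close>; both orientations of that edge then contribute \<open>\<alpha>\<^sub>m\<^sub>i\<^sub>n \<epsilon> \<delta>\<^sup>3\<close> each. The masses
  are in \<open>(\<epsilon>, 1]\<close> at the start of every step because migration and birth conserve the
  total mass and the death phase ends only when all masses exceed \<open>\<epsilon>\<close>.\<close>

section \<open>Sums over symmetric relations\<close>

lemma sum_swap_sym:
  assumes "sym E"
  shows "(\<Sum>p\<in>E. f p) = (\<Sum>p\<in>E. f (snd p, fst p))"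
  by (rule sum.reindex_bij_witness[of _ prod.swap prod.swap])
     (use assms in \<open>auto simp: sym_def\<close>)

lemma sum_weighted_antisym:
  fixes g :: "'a \<times> 'a \<Rightarrow> real"
  assumes "sym E" and antisym: "\<And>a b. (a, b) \<in> E \<Longrightarrow> g (b, a) = - g (a, b)"
  shows "2 * (\<Sum>p\<in>E. x (fst p) * g p) = (\<Sum>p\<in>E. (x (fst p) - x (snd p)) * g p)"
proof -
  have "(\<Sum>p\<in>E. x (fst p) * g p) = (\<Sum>p\<in>E. x (snd p) * g (snd p, fst p))"
    using sum_swap_sym[OF assms(1), of "\<lambda>p. x (fst p) * g p"] by simp
  also have "\<dots> = (\<Sum>p\<in>E. - (x (snd p) * g p))"
    by (rule sum.cong) (auto simp: antisym)
  finally show ?thesis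
    by (simp add: left_diff_distrib sum_subtractf sum_negf)
qed

abbreviation total_mass :: "state \<Rightarrow> real" where
  "total_mass s \<equiv> \<Sum>v\<in>verts s. mass s v"

lemma graph_ok_migrate [simp]: "graph_ok (migrate F \<delta> s) \<longleftrightarrow> graph_ok s"
  by (simp add: graph_ok_def migrate_def)

lemma graph_ok_finite_edges: "graph_ok s \<Longrightarrow> finite (edges s)"
  by (auto simp: graph_ok_def intro: finite_subset[of _ "verts s \<times> verts s"])

lemma sum_nbrs_eq_sum_edges:
  assumes "graph_ok s"
  shows "(\<Sum>w\<in>verts s. \<Sum>u\<in>nbrs s w. h w u) = (\<Sum>p\<in>edges s. h (fst p) (snd p))"
proof -
  have fin: "finite (verts s)" and sub: "edges s \<subseteq> verts s \<times> verts s"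
    using assms by (auto simp: graph_ok_def)
  have "\<And>w. finite (nbrs s w)"
    by (rule finite_subset[of _ "verts s"]) (use sub fin in \<open>auto simp: nbrs_def\<close>)
  then have "(\<Sum>w\<in>verts s. \<Sum>u\<in>nbrs s w. h w u) = (\<Sum>p\<in>Sigma (verts s) (nbrs s). h (fst p) (snd p))"
    by (subst sum.Sigma) (auto simp: fin split_def)
  also have "Sigma (verts s) (nbrs s) = edges s"
    using sub by (auto simp: nbrs_def)
  finally show ?thesis .
qed

text \<open>A dying type without neighbours is the only type, so the graph becomes empty.\<close>

lemma death_step_total_mass:
  assumes "death_step \<epsilon> s s'" and "graph_ok s"
  shows "verts s' = {} \<or> total_mass s' = total_mass s"
proof -
  from assms(1) obtain v where v: "v \<in> verts s" and vs: "verts s' = verts s - {v}"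
    and ms: "mass s' = (\<lambda>u. if u \<in> nbrs s v then mass s u + mass s v / real (card (nbrs s v))
                            else mass s u)"
    unfolding death_step_def by blast
  have fin: "finite (verts s)" and sub: "edges s \<subseteq> verts s \<times> verts s"
    and irr: "irrefl (edges s)" and con: "\<forall>u\<in>verts s. \<forall>w\<in>verts s. (u, w) \<in> (edges s)\<^sup>*"
    using assms(2) by (auto simp: graph_ok_def)
  let ?N = "nbrs s v"
  have Nsub: "?N \<subseteq> verts s - {v}"
    using sub irr by (auto simp: nbrs_def irrefl_def)
  have finN: "finite ?N"
    using Nsub fin finite_subset by blast
  show ?thesis
  proof (cases "?N = {}")
    case True
    have "verts s = {v}"
    proof (rule ccontr)
      assume "verts s \<noteq> {v}"
      then obtain u where u: "u \<in> verts s" "u \<noteq> v" using v by blast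
      have "(v, u) \<in> (edges s)\<^sup>*" using con v u by blast
      then show False using u(2) True
        by (cases rule: converse_rtranclE) (auto simp: nbrs_def)
    qed
    then show ?thesis using vs by simp
  next
    case False
    have "total_mass s' = (\<Sum>u\<in>verts s - {v}. mass s u)
        + (\<Sum>u\<in>verts s - {v}. if u \<in> ?N then mass s v / real (card ?N) else 0)"
      unfolding vs ms sum.distrib[symmetric] by (rule sum.cong) auto
    also have "(\<Sum>u\<in>verts s - {v}. if u \<in> ?N then mass s v / real (card ?N) else 0)
        = (\<Sum>u\<in>?N. mass s v / real (card ?N))"
      using fin Nsub by (simp add: sum.inter_restrict[symmetric] Int_absorb1)
    also have "\<dots> = mass s v"
      using False finN by simp
    finally show ?thesis
      using fin v by (simp add: sum_diff1)
  qed
qed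

lemma birth_step_total_mass:
  assumes "birth_step bmin bmax s s'" and "finite (verts s)"
  shows "graph_ok s' \<and> total_mass s' = total_mass s"
proof -
  from assms(1) obtain w Z where w: "w \<notin> verts s" and vs: "verts s' = insert w (verts s)"
    and ms: "mass s' = (\<lambda>u. if u = w then (\<Sum>v\<in>verts s. Z v * mass s v)
                            else if u \<in> verts s then mass s u - Z u * mass s u else mass s u)"
    and g: "graph_ok s'"
    unfolding birth_step_def by (elim exE conjE) (rule that; assumption)
  have "total_mass s' = mass s' w + (\<Sum>v\<in>verts s. mass s' v)"
    unfolding vs using w assms(2) by simp
  also have "(\<Sum>v\<in>verts s. mass s' v) = (\<Sum>v\<in>verts s. mass s v - Z v * mass s v)"
    by (rule sum.cong) (use w in \<open>auto simp: ms\<close>)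
  also have "mass s' w = (\<Sum>v\<in>verts s. Z v * mass s v)"
    by (simp add: ms)
  finally show ?thesis
    using g by (simp add: sum_subtractf)
qed

lemma birth_phase_total_mass:
  assumes "birth_phase p bmin bmax s s'" and "graph_ok s"
  shows "graph_ok s' \<and> total_mass s' = total_mass s"
  using assms birth_step_total_mass[of bmin bmax s s']
  by (auto simp: birth_phase_def graph_ok_def)

definition admissible :: "real \<Rightarrow> state \<Rightarrow> bool" where
  "admissible \<epsilon> s \<longleftrightarrow> graph_ok s \<and> total_mass s \<le> 1 \<and> (\<forall>v\<in>verts s. \<epsilon> < mass s v)"

lemma admissible_mass_bounds:
  assumes "admissible \<epsilon> s" "0 \<le> \<epsilon>" "v \<in> verts s"
  shows "\<epsilon> < mass s v" "mass s v \<le> 1"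
proof -
  show "\<epsilon> < mass s v"
    using assms by (simp add: admissible_def)
  have "mass s v \<le> total_mass s"
    by (rule member_le_sum) (use assms in \<open>force simp: admissible_def graph_ok_def\<close>)+
  then show "mass s v \<le> 1"
    using assms(1) by (simp add: admissible_def)
qed

lemma admissible_edge_masses:
  assumes "admissible \<epsilon> s" "0 \<le> \<epsilon>" "(u, v) \<in> edges s"
  shows "u \<noteq> v" "\<epsilon> < mass s u" "\<epsilon> < mass s v" "mass s u - mass s v \<in> {-1..1}"
proof -
  have "graph_ok s"
    using assms(1) by (simp add: admissible_def)
  then have "u \<noteq> v" "u \<in> verts s" "v \<in> verts s"
    using assms(3) by (auto simp: graph_ok_def irrefl_def)
  then show "u \<noteq> v" "\<epsilon> < mass s u" "\<epsilon> < mass s v" "mass s u - mass s v \<in> {-1..1}"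
    using admissible_mass_bounds[OF assms(1,2)] assms(2) by force+
qed

lemma death_phase_admissible:
  assumes "death_phase \<epsilon> s s'" "graph_ok s" "total_mass s \<le> 1"
  shows "admissible \<epsilon> s'"
  using assms
proof (induction rule: death_phase.induct)
  case (finished s)
  then show ?case by (simp add: admissible_def)
next
  case (step s s1 s2)
  have "graph_ok s1"
    using step.hyps(1) by (auto simp: death_step_def)
  moreover have "total_mass s1 \<le> 1"
    using death_step_total_mass[OF step.hyps(1) step.prems(1)] step.prems(2) by auto
  ultimately show ?case by (rule step.IH)
qed

section \<open>Derivative bounds\<close>

lemma deriv_nonneg_if_mono_on_Icc:
  fixes f f' :: "real \<Rightarrow> real"
  assumes "a < b" and mono: "mono_on {a..b} f"
    and deriv: "\<And>x. x \<in> {a..b} \<Longrightarrow> (f has_real_derivative f' x) (at x within {a..b})"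
    and cont: "continuous_on {a..b} f'" and x: "x \<in> {a..b}"
  shows "0 \<le> f' x"
proof (rule continuous_ge_on_Ioo[OF cont _ \<open>a < b\<close> x])
  fix y :: real
  assume y: "y \<in> {a<..<b}"
  then have "at y within {a..b} = at y"
    by (intro at_within_Icc_at) auto
  then have "(f has_real_derivative f' y) (at y)"
    using deriv[of y] y by auto
  then show "0 \<le> f' y"
    by (rule mono_on_imp_deriv_nonneg[OF mono]) (use y in simp)
qed

lemma deriv_ge_imp_mult_sq_le:
  fixes f f' :: "real \<Rightarrow> real"
  assumes "0 \<in> {a..b}" "d \<in> {a..b}" "f 0 = 0"
    and deriv: "\<And>x. x \<in> {a..b} \<Longrightarrow> (f has_real_derivative f' x) (at x within {a..b})"
    and lower: "\<And>x. x \<in> {a..b} \<Longrightarrow> c \<le> f' x"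
  shows "c * d\<^sup>2 \<le> d * f d"
proof -
  let ?lo = "min 0 d" and ?hi = "max 0 d"
  have "\<exists>y\<in>{?lo..?hi}. f ?hi - f ?lo = f' y * (?hi - ?lo)"
  proof (rule mvt_very_simple[where f' = "\<lambda>y h. f' y * h"])
    fix y
    assume "?lo \<le> y" "y \<le> ?hi"
    then have "(f has_real_derivative f' y) (at y within {?lo..?hi})"
      by (intro DERIV_subset[OF deriv]) (use assms(1,2) in auto)
    then show "(f has_derivative (\<lambda>h. f' y * h)) (at y within {?lo..?hi})"
      by (simp add: has_field_derivative_def)
  qed simp
  then obtain y where "y \<in> {?lo..?hi}" and "f d = f' y * d"
    using assms(3) by (cases "0 \<le> d") (auto simp: algebra_simps)
  moreover have "y \<in> {a..b}"
    using \<open>y \<in> {?lo..?hi}\<close> assms(1,2) by auto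
  ultimately show ?thesis
    using mult_right_mono[OF lower, of y "d\<^sup>2"] by (simp add: power2_eq_square mult_ac)
qed

lemma alpha_min_bounds:
  fixes F F' :: "nat \<Rightarrow> nat \<Rightarrow> real \<Rightarrow> real"
  assumes F_deriv: "\<And>u v x. u \<noteq> v \<Longrightarrow> x \<in> {-1..1} \<Longrightarrow>
                   (F u v has_real_derivative F' u v x) (at x within {-1..1})"
    and F'_cont: "\<And>u v. u \<noteq> v \<Longrightarrow> continuous_on {-1..1} (F' u v)"
    and F_mono: "\<And>u v. u \<noteq> v \<Longrightarrow> mono_on {-1..1} (F u v)"
  shows "0 \<le> alpha_min F'"
    and "u \<noteq> v \<Longrightarrow> x \<in> {-1..1} \<Longrightarrow> alpha_min F' \<le> F' u v x"
proof -
  define S where "S = {F' u v x | u v x. u \<noteq> v \<and> x \<in> {-1..(1::real)}}"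
  have nonneg: "\<And>y. y \<in> S \<Longrightarrow> 0 \<le> y"
    unfolding S_def using deriv_nonneg_if_mono_on_Icc[OF _ F_mono F_deriv F'_cont] by force
  have "alpha_min F' = Inf S"
    by (simp add: alpha_min_def S_def)
  moreover have "S \<noteq> {}"
    unfolding S_def by force
  ultimately show "0 \<le> alpha_min F'"
    using nonneg by (simp add: cInf_greatest)
  show "alpha_min F' \<le> F' u v x" if "u \<noteq> v" "x \<in> {-1..1}"
    unfolding \<open>alpha_min F' = Inf S\<close>
    by (rule cInf_lower) (use that nonneg in \<open>auto simp: S_def bdd_below_def\<close>)
qed

section \<open>Increase of \<open>\<Phi>\<close> under migration\<close>

lemma flow_energy_eq:
  "(mass s u - mass s v) * flow F \<delta> s u v =
     (if \<bar>mass s u - mass s v\<bar> \<le> \<delta> then 0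
      else mass s u * mass s v * ((mass s u - mass s v) * F u v (mass s u - mass s v)))"
  by (simp add: flow_def mult_ac)

locale migration_energy =
  fixes F :: "nat \<Rightarrow> nat \<Rightarrow> real \<Rightarrow> real" and \<alpha> \<delta> \<epsilon> :: real
  assumes F_sym: "\<And>u v. F u v = F v u"
    and F_odd: "\<And>u v x. u \<noteq> v \<Longrightarrow> x \<in> {-1..1} \<Longrightarrow> F u v (-x) = - F u v x"
    and sq_le_mult_F: "\<And>u v d. u \<noteq> v \<Longrightarrow> d \<in> {-1..1} \<Longrightarrow> \<alpha> * d\<^sup>2 \<le> d * F u v d"
    and alpha_nonneg: "0 \<le> \<alpha>" and delta_nonneg: "0 \<le> \<delta>" and eps_nonneg: "0 \<le> \<epsilon>"
begin

lemma flow_antisym: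
  assumes "w \<noteq> u" "mass s w - mass s u \<in> {-1..1}"
  shows "flow F \<delta> s u w = - flow F \<delta> s w u"
proof -
  have "F u w (mass s u - mass s w) = - F w u (mass s w - mass s u)"
    using F_odd[OF assms] F_sym[of u w] by simp
  then show ?thesis
    unfolding flow_def by (auto simp: abs_minus_commute)
qed

lemma flow_antisym_admissible:
  assumes "admissible \<epsilon> s" "(w, u) \<in> edges s"
  shows "flow F \<delta> s u w = - flow F \<delta> s w u"
  using admissible_edge_masses[OF assms(1) eps_nonneg assms(2)] by (intro flow_antisym) auto

lemma migrate_total_mass:
  assumes "admissible \<epsilon> s"
  shows "total_mass (migrate F \<delta> s) = total_mass s"
proof -
  have g: "graph_ok s"
    using assms by (simp add: admissible_def)
  have "2 * (\<Sum>p\<in>edges s. 1 * flow F \<delta> s (fst p) (snd p)) = 0"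
    using sum_weighted_antisym[of "edges s" "\<lambda>p. flow F \<delta> s (fst p) (snd p)" "\<lambda>_. 1"]
      g flow_antisym_admissible[OF assms] by (simp add: graph_ok_def)
  moreover have "total_mass (migrate F \<delta> s)
      = (\<Sum>w\<in>verts s. mass s w + (\<Sum>u\<in>nbrs s w. flow F \<delta> s w u))"
    by (simp add: migrate_def)
  ultimately show ?thesis
    by (simp add: sum.distrib sum_nbrs_eq_sum_edges[OF g])
qed

lemma run_admissible:
  assumes "run F \<epsilon> \<delta> p bmin bmax X"
  shows "admissible \<epsilon> (X t)"
proof (induction t)
  case 0
  then show ?case
    using assms by (simp add: run_def valid_initial_def admissible_def)
next
  case (Suc t)
  obtain b where birth: "birth_phase p bmin bmax (migrate F \<delta> (X t)) b"
    and death: "death_phase \<epsilon> b (X (Suc t))"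
    using assms unfolding run_def by blast
  have "graph_ok (migrate F \<delta> (X t))" "total_mass (migrate F \<delta> (X t)) \<le> 1"
    using Suc.IH migrate_total_mass[OF Suc.IH] by (simp_all add: admissible_def)
  then show ?case
    using birth_phase_total_mass[OF birth] death_phase_admissible[OF death] by simp
qed

lemma Phi_migrate_ge:
  assumes "admissible \<epsilon> s"
  shows "Phi s + (\<Sum>p\<in>edges s. (mass s (fst p) - mass s (snd p)) * flow F \<delta> s (fst p) (snd p))
      \<le> Phi (migrate F \<delta> s)"
proof -
  let ?g = "\<lambda>w. \<Sum>u\<in>nbrs s w. flow F \<delta> s w u"
  have g: "graph_ok s"
    using assms by (simp add: admissible_def)
  have "2 * (\<Sum>p\<in>edges s. mass s (fst p) * flow F \<delta> s (fst p) (snd p))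
      = (\<Sum>p\<in>edges s. (mass s (fst p) - mass s (snd p)) * flow F \<delta> s (fst p) (snd p))"
    using sum_weighted_antisym[of "edges s" "\<lambda>p. flow F \<delta> s (fst p) (snd p)" "mass s"]
      g flow_antisym_admissible[OF assms] by (simp add: graph_ok_def)
  moreover have "(\<Sum>p\<in>edges s. mass s (fst p) * flow F \<delta> s (fst p) (snd p))
      = (\<Sum>w\<in>verts s. mass s w * ?g w)"
    by (simp add: sum_distrib_left sum_nbrs_eq_sum_edges[OF g])
  moreover have "Phi s + 2 * (\<Sum>w\<in>verts s. mass s w * ?g w)
      = (\<Sum>w\<in>verts s. (mass s w)\<^sup>2 + 2 * (mass s w * ?g w))"
    by (simp only: Phi_def sum.distrib sum_distrib_left)
  moreover have "\<dots> \<le> (\<Sum>w\<in>verts s. (mass s w + ?g w)\<^sup>2)"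
    by (rule sum_mono) (simp add: power2_sum)
  moreover have "(\<Sum>w\<in>verts s. (mass s w + ?g w)\<^sup>2) = Phi (migrate F \<delta> s)"
    by (simp add: Phi_def migrate_def)
  ultimately show ?thesis
    by linarith
qed

lemma flow_energy_nonneg:
  assumes "admissible \<epsilon> s" "(u, v) \<in> edges s"
  shows "0 \<le> (mass s u - mass s v) * flow F \<delta> s u v"
proof -
  note uv = admissible_edge_masses[OF assms(1) eps_nonneg assms(2)]
  have "0 \<le> \<alpha> * (mass s u - mass s v)\<^sup>2"
    using alpha_nonneg by simp
  also have "\<dots> \<le> (mass s u - mass s v) * F u v (mass s u - mass s v)"
    using sq_le_mult_F uv by simp
  finally show ?thesis
    unfolding flow_energy_eq using uv eps_nonneg by simp
qed

lemma flow_energy_ge: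
  assumes "admissible \<epsilon> s" "(u, v) \<in> edges s" "flow F \<delta> s u v \<noteq> 0"
  shows "\<alpha> * \<epsilon> * \<delta> ^ 3 \<le> (mass s u - mass s v) * flow F \<delta> s u v"
proof -
  note uv = admissible_edge_masses[OF assms(1) eps_nonneg assms(2)]
  define d where "d = mass s u - mass s v"
  have big: "\<delta> < \<bar>d\<bar>"
    using assms(3) unfolding flow_def d_def by (auto split: if_splits)
  have "\<epsilon> * \<delta> \<le> mass s u * mass s v"
  proof (cases "mass s v \<le> mass s u")
    case True
    then have "\<delta> \<le> mass s u"
      using big uv eps_nonneg unfolding d_def by auto
    then show ?thesis
      using mult_mono[of \<epsilon> "mass s v" \<delta> "mass s u"] uv eps_nonneg delta_nonneg
      by (simp add: mult.commute)
  next
    case False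
    then have "\<delta> \<le> mass s v"
      using big uv eps_nonneg unfolding d_def by auto
    then show ?thesis
      using mult_mono[of \<epsilon> "mass s u" \<delta> "mass s v"] uv eps_nonneg delta_nonneg by simp
  qed
  moreover have "\<delta>\<^sup>2 \<le> d\<^sup>2"
    using power_mono[of \<delta> "\<bar>d\<bar>" 2] big delta_nonneg by simp
  ultimately have "(\<epsilon> * \<delta>) * \<delta>\<^sup>2 \<le> (mass s u * mass s v) * d\<^sup>2"
    by (rule mult_mono) (use uv eps_nonneg in auto)
  then have "\<alpha> * \<epsilon> * \<delta> ^ 3 \<le> (mass s u * mass s v) * (\<alpha> * d\<^sup>2)"
    using mult_left_mono[OF _ alpha_nonneg] by (fastforce simp: power3_eq_cube power2_eq_square mult_ac)
  also have "\<dots> \<le> (mass s u * mass s v) * (d * F u v d)"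
    by (rule mult_left_mono) (use sq_le_mult_F uv eps_nonneg d_def in auto)
  also have "\<dots> = (mass s u - mass s v) * flow F \<delta> s u v"
    using big unfolding d_def by (simp add: flow_def mult_ac)
  finally show ?thesis .
qed

lemma Phi_migrate_increase:
  assumes "admissible \<epsilon> s" "mass_moves F \<delta> s"
  shows "Phi s + 2 * \<alpha> * \<epsilon> * \<delta> ^ 3 \<le> Phi (migrate F \<delta> s)"
proof -
  let ?e = "\<lambda>p. (mass s (fst p) - mass s (snd p)) * flow F \<delta> s (fst p) (snd p)"
  obtain a b where ab: "(a, b) \<in> edges s" and moves: "flow F \<delta> s a b \<noteq> 0"
    using assms(2) by (auto simp: mass_moves_def)
  have g: "graph_ok s"
    using assms(1) by (simp add: admissible_def)
  then have ba: "(b, a) \<in> edges s"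
    using ab by (auto simp: graph_ok_def sym_def)
  have "flow F \<delta> s b a \<noteq> 0"
    using moves flow_antisym_admissible[OF assms(1) ab] by simp
  then have "2 * \<alpha> * \<epsilon> * \<delta> ^ 3 \<le> ?e (a, b) + ?e (b, a)"
    using flow_energy_ge[OF assms(1) ab moves] flow_energy_ge[OF assms(1) ba] by simp
  also have "\<dots> = (\<Sum>p\<in>{(a, b), (b, a)}. ?e p)"
    using admissible_edge_masses(1)[OF assms(1) eps_nonneg ab] by simp
  also have "\<dots> \<le> (\<Sum>p\<in>edges s. ?e p)"
    using ab ba flow_energy_nonneg[OF assms(1)]
    by (intro sum_mono2 graph_ok_finite_edges[OF g]) auto
  finally show ?thesis
    using Phi_migrate_ge[OF assms(1)] by linarith
qed

end

theorem mainTheorem11: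
  fixes F F' :: "nat \<Rightarrow> nat \<Rightarrow> real \<Rightarrow> real"
    and \<epsilon> \<delta> p bmin bmax :: real and X :: "nat \<Rightarrow> state" and t :: nat
  assumes F_sym: "\<And>u v. F u v = F v u"
    and F_deriv: "\<And>u v x. u \<noteq> v \<Longrightarrow> x \<in> {-1..1} \<Longrightarrow>
                   (F u v has_real_derivative F' u v x) (at x within {-1..1})"
    and F'_cont: "\<And>u v. u \<noteq> v \<Longrightarrow> continuous_on {-1..1} (F' u v)"
    and F_mono: "\<And>u v. u \<noteq> v \<Longrightarrow> mono_on {-1..1} (F u v)"
    and F_odd: "\<And>u v x. u \<noteq> v \<Longrightarrow> x \<in> {-1..1} \<Longrightarrow> F u v (-x) = - F u v x"
    and F_range: "\<And>u v x. u \<noteq> v \<Longrightarrow> x \<in> {-1..1} \<Longrightarrow> F u v x \<in> {-1..1}"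
    and F_zero: "\<And>u v. u \<noteq> v \<Longrightarrow> F u v 0 = 0"
    and eps: "0 < \<epsilon>" and del: "0 < \<delta>" and p: "0 \<le> p" "p \<le> 1"
    and beta: "bmin \<le> bmax"
    and R: "run F \<epsilon> \<delta> p bmin bmax X"
    and notstable: "\<not> stable F \<delta> X t 0"
  shows "Phi (migrate F \<delta> (X t)) \<ge> Phi (X t) + 2 * alpha_min F' * \<epsilon> * \<delta> ^ 3"
proof -
  have alpha_le: "alpha_min F' \<le> F' u v x" if "u \<noteq> v" "x \<in> {-1..1}" for u v x
    using alpha_min_bounds(2)[where F = F and F' = F', OF F_deriv F'_cont F_mono that] .
  interpret migration_energy F "alpha_min F'" \<delta> \<epsilon>
  proof
    show "alpha_min F' * d\<^sup>2 \<le> d * F u v d" if "u \<noteq> v" "d \<in> {-1..1}" for u v d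
      by (rule deriv_ge_imp_mult_sq_le[where a = "-1" and b = 1 and f' = "F' u v"])
         (use that F_zero F_deriv alpha_le in auto)
  qed (use F_sym F_odd alpha_min_bounds(1)[OF F_deriv F'_cont F_mono] eps del in auto)
  have "mass_moves F \<delta> (X t)"
    using notstable by (auto simp: stable_def dest: antisym)
  then show ?thesis
    using Phi_migrate_increase[OF run_admissible[OF R]] by simp
qed

end
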